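(* For every $x>0$, $$x\,e^{-x^2/6}<\sqrt{2\pi}\Big(\Phi(x)-\frac12\Big)<x\,e^{-x^2/6+x^4/90}.$$
   Context: $\Phi$ is the standard normal distribution function. *)

theory Defs
  imports "HOL-Probability.Probability"
begin

definition std_normal_cdf :: "real \<Rightarrow> real" where
  "std_normal_cdf x = (LBINT t:{..x}. std_normal_density t)"

end

theory Submission
  imports Defs
begin

text \<open>By symmetry of the density, \<open>sqrt (2*pi) * (std_normal_cdf x - 1/2)\<close> equals
  \<open>F x = integral {0..x} (\<lambda>t. exp (- t\<^sup>2/2))\<close>. Both bounds agree with \<open>F\<close> at \<open>0\<close>, so it
  suffices to compare derivatives on \<open>(0, x)\<close>. For the lower bound this is
  \<open>1 - y\<^sup>2/3 < exp (- y\<^sup>2/3)\<close>. For the upper bound it is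
  \<open>1 < exp (y\<^sup>2/3 + y^4/90) * (1 - y\<^sup>2/3 + 2*y^4/45)\<close>, which holds because the
  right-hand side equals \<open>1\<close> at \<open>0\<close> and has derivative
  \<open>exp (y\<^sup>2/3 + y^4/90) * (2*y^5/135 + 4*y^7/2025) > 0\<close>.\<close>

lemma set_integrable_std_normal_density:
  "A \<in> sets lborel \<Longrightarrow> set_integrable lborel A std_normal_density"
  unfolding set_integrable_def by (rule integrable_mult_indicator) auto

lemma std_normal_density_has_integral_half: "(std_normal_density has_integral 1/2) {..0}"
proof -
  have integral_eq: "(LBINT t:A. std_normal_density t) = integral A std_normal_density"
    and integrable: "std_normal_density integrable_on A" if "A \<in> sets lborel" for A :: "real set"
    using set_borel_integral_eq_integral[OF set_integrable_std_normal_density[OF that]] by auto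
  define I where "I = integral {..0} std_normal_density"
  have "(LBINT t:{..0::real}. std_normal_density t) = (LBINT t:{0..}. std_normal_density t)"
    unfolding set_lebesgue_integral_def
    by (subst lborel_integral_real_affine[where c = "-1" and t = 0])
       (auto simp: std_normal_density_def indicator_def intro!: Bochner_Integration.integral_cong)
  then have symmetric: "integral {..0} std_normal_density = integral {0..} std_normal_density"
    using integral_eq by simp
  have nonpos: "(std_normal_density has_integral I) {..0}"
    unfolding I_def by (rule integrable_integral, rule integrable) simp
  have nonneg: "(std_normal_density has_integral I) {0..}"
    unfolding I_def symmetric by (rule integrable_integral, rule integrable) simp
  have "(std_normal_density has_integral (I + I)) ({..0} \<union> {0..})"
    by (rule has_integral_Un[OF nonpos nonneg], rule negligible_subset[of "{0}"]) auto
  moreover have "{..0::real} \<union> {0..} = UNIV"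
    by auto
  ultimately have "(std_normal_density has_integral (I + I)) UNIV"
    by simp
  moreover have "(std_normal_density has_integral 1) UNIV"
    using has_integral_integral_lborel[OF integrable_normal_density[of 1 0]] by simp
  ultimately have "I + I = 1"
    by (rule has_integral_unique)
  then have "I = 1/2"
    by linarith
  with nonpos show ?thesis
    by simp
qed

lemma std_normal_cdf_eq_half_plus_integral:
  assumes "0 \<le> x"
  shows "std_normal_cdf x = 1/2 + integral {0..x} std_normal_density"
proof -
  have nonneg_part: "(std_normal_density has_integral integral {0..x} std_normal_density) {0..x}"
    by (intro integrable_integral integrable_continuous_real)
       (auto simp: std_normal_density_def intro!: continuous_intros)
  have "(std_normal_density has_integral (1/2 + integral {0..x} std_normal_density)) ({..0} \<union> {0..x})"
    by (rule has_integral_Un[OF std_normal_density_has_integral_half nonneg_part],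
        rule negligible_subset[of "{0}"]) auto
  moreover have "{..0} \<union> {0..x} = {..x}" using assms by auto
  ultimately show ?thesis
    unfolding std_normal_cdf_def
    using set_borel_integral_eq_integral(2)[OF set_integrable_std_normal_density[of "{..x}"]]
    by (simp add: integral_unique)
qed

lemma sqrt_2pi_times_std_normal_cdf_minus_half:
  assumes "0 \<le> x"
  shows "sqrt (2*pi) * (std_normal_cdf x - 1/2) = integral {0..x} (\<lambda>t. exp (- t\<^sup>2 / 2))"
proof -
  have "integral {0..x} std_normal_density = integral {0..x} (\<lambda>t. exp (- t\<^sup>2 / 2)) / sqrt (2*pi)"
    unfolding std_normal_density_def integral_mult_left integral_mult_right by simp
  then show ?thesis using std_normal_cdf_eq_half_plus_integral[OF assms] by simp
qed

lemma integral_upper_bound_has_real_derivative: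
  fixes f :: "real \<Rightarrow> real"
  assumes "continuous_on UNIV f" and "a < y"
  shows "((\<lambda>z. integral {a..z} f) has_real_derivative f y) (at y)"
proof -
  have "((\<lambda>z. integral {a..z} f) has_real_derivative f y) (at y within {a..y+1})"
    using assms by (intro integral_has_real_derivative continuous_on_subset[OF assms(1)]) auto
  moreover have "at y within {a..y+1} = at y"
    using assms by (intro at_within_interior) auto
  ultimately show ?thesis by simp
qed

lemma DERIV_less_imp_less:
  fixes f g :: "real \<Rightarrow> real"
  assumes "a < b" and "f a \<le> g a"
    and "continuous_on {a..b} f" and "continuous_on {a..b} g"
    and "\<And>y. a < y \<Longrightarrow> y < b \<Longrightarrow> (f has_real_derivative f' y) (at y)"
    and "\<And>y. a < y \<Longrightarrow> y < b \<Longrightarrow> (g has_real_derivative g' y) (at y)"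
    and "\<And>y. a < y \<Longrightarrow> y < b \<Longrightarrow> f' y < g' y"
  shows "f b < g b"
proof -
  have "(\<lambda>z. g z - f z) a < (\<lambda>z. g z - f z) b"
  proof (rule DERIV_pos_imp_increasing_open[OF \<open>a < b\<close>])
    fix y assume "a < y" "y < b"
    then have "((\<lambda>z. g z - f z) has_real_derivative g' y - f' y) (at y)" and "0 < g' y - f' y"
      using assms(5-7) by (auto intro: DERIV_diff)
    then show "\<exists>d. ((\<lambda>z. g z - f z) has_real_derivative d) (at y) \<and> 0 < d"
      by blast
  qed (use assms(3,4) in \<open>intro continuous_intros\<close>)
  then show ?thesis using \<open>f a \<le> g a\<close> by simp
qed

lemma continuous_on_gauss_integral:
  "continuous_on {0..b} (\<lambda>z. integral {0..z} (\<lambda>t::real. exp (- t\<^sup>2 / 2)))"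
  by (intro indefinite_integral_continuous_1 integrable_continuous_real)
     (auto intro!: continuous_intros)

lemma gauss_integral_has_real_derivative:
  "0 < y \<Longrightarrow> ((\<lambda>z. integral {0..z} (\<lambda>t. exp (- t\<^sup>2 / 2))) has_real_derivative exp (- y\<^sup>2 / 2)) (at y)"
  by (rule integral_upper_bound_has_real_derivative) (auto intro!: continuous_intros)

lemma gauss_integral_lower_bound:
  fixes x :: real
  assumes "0 < x"
  shows "x * exp (- x\<^sup>2 / 6) < integral {0..x} (\<lambda>t. exp (- t\<^sup>2 / 2))"
proof -
  have "(\<lambda>z. z * exp (- z\<^sup>2 / 6)) x < (\<lambda>z. integral {0..z} (\<lambda>t. exp (- t\<^sup>2 / 2))) x"
  proof (rule DERIV_less_imp_less[OF assms])
    fix y :: real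
    show "((\<lambda>z. z * exp (- z\<^sup>2 / 6)) has_real_derivative exp (- y\<^sup>2 / 6) * (1 - y\<^sup>2 / 3)) (at y)"
      by (auto intro!: derivative_eq_intros simp: power2_eq_square field_simps)
    assume "0 < y"
    then show "((\<lambda>z. integral {0..z} (\<lambda>t. exp (- t\<^sup>2 / 2))) has_real_derivative exp (- y\<^sup>2 / 2)) (at y)"
      by (rule gauss_integral_has_real_derivative)
    have "1 - y\<^sup>2 / 3 < exp (- (y\<^sup>2 / 3))"
      using \<open>0 < y\<close> by (simp add: exp_minus_greater)
    then have "exp (- y\<^sup>2 / 6) * (1 - y\<^sup>2 / 3) < exp (- y\<^sup>2 / 6) * exp (- (y\<^sup>2 / 3))"
      by simp
    also have "\<dots> = exp (- y\<^sup>2 / 2)"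
      by (simp flip: exp_add)
    finally show "exp (- y\<^sup>2 / 6) * (1 - y\<^sup>2 / 3) < exp (- y\<^sup>2 / 2)" .
  next
    show "continuous_on {0..x} (\<lambda>z. integral {0..z} (\<lambda>t. exp (- t\<^sup>2 / 2)))"
      by (rule continuous_on_gauss_integral)
    show "continuous_on {0..x} (\<lambda>z. z * exp (- z\<^sup>2 / 6))"
      by (intro continuous_intros) auto
  qed simp
  then show ?thesis by simp
qed

lemma one_less_exp_times_quartic:
  fixes x :: real
  assumes "0 < x"
  shows "1 < exp (x\<^sup>2 / 3 + x^4 / 90) * (1 - x\<^sup>2 / 3 + 2 * x^4 / 45)"
proof -
  have "(\<lambda>_. 1) x < (\<lambda>z. exp (z\<^sup>2 / 3 + z^4 / 90) * (1 - z\<^sup>2 / 3 + 2 * z^4 / 45)) x"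
  proof (rule DERIV_less_imp_less[OF assms])
    fix y :: real
    show "((\<lambda>z. exp (z\<^sup>2 / 3 + z^4 / 90) * (1 - z\<^sup>2 / 3 + 2 * z^4 / 45))
        has_real_derivative exp (y\<^sup>2 / 3 + y^4 / 90) * (2 * y^5 / 135 + 4 * y^7 / 2025)) (at y)"
      by (auto intro!: derivative_eq_intros) (simp add: field_simps eval_nat_numeral; algebra)
    assume "0 < y"
    then show "0 < exp (y\<^sup>2 / 3 + y^4 / 90) * (2 * y^5 / 135 + 4 * y^7 / 2025)"
      by (intro mult_pos_pos add_pos_pos) auto
  qed (auto intro!: derivative_eq_intros continuous_intros)
  then show ?thesis by simp
qed

lemma gauss_integral_upper_bound:
  fixes x :: real
  assumes "0 < x"
  shows "integral {0..x} (\<lambda>t. exp (- t\<^sup>2 / 2)) < x * exp (- x\<^sup>2 / 6 + x^4 / 90)"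
proof -
  have "(\<lambda>z. integral {0..z} (\<lambda>t. exp (- t\<^sup>2 / 2))) x < (\<lambda>z. z * exp (- z\<^sup>2 / 6 + z^4 / 90)) x"
  proof (rule DERIV_less_imp_less[OF assms])
    fix y :: real
    show "((\<lambda>z. z * exp (- z\<^sup>2 / 6 + z^4 / 90))
        has_real_derivative exp (- y\<^sup>2 / 6 + y^4 / 90) * (1 - y\<^sup>2 / 3 + 2 * y^4 / 45)) (at y)"
      by (auto intro!: derivative_eq_intros) (simp add: field_simps eval_nat_numeral; algebra)
    assume "0 < y"
    then show "((\<lambda>z. integral {0..z} (\<lambda>t. exp (- t\<^sup>2 / 2))) has_real_derivative exp (- y\<^sup>2 / 2)) (at y)"
      by (rule gauss_integral_has_real_derivative)
    have "exp (- y\<^sup>2 / 2) * 1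
        < exp (- y\<^sup>2 / 2) * (exp (y\<^sup>2 / 3 + y^4 / 90) * (1 - y\<^sup>2 / 3 + 2 * y^4 / 45))"
      using one_less_exp_times_quartic[OF \<open>0 < y\<close>] by simp
    also have "\<dots> = exp (- y\<^sup>2 / 6 + y^4 / 90) * (1 - y\<^sup>2 / 3 + 2 * y^4 / 45)"
      by (simp flip: exp_add mult.assoc)
    finally show "exp (- y\<^sup>2 / 2) < exp (- y\<^sup>2 / 6 + y^4 / 90) * (1 - y\<^sup>2 / 3 + 2 * y^4 / 45)"
      by simp
  next
    show "continuous_on {0..x} (\<lambda>z. integral {0..z} (\<lambda>t. exp (- t\<^sup>2 / 2)))"
      by (rule continuous_on_gauss_integral)
    show "continuous_on {0..x} (\<lambda>z. z * exp (- z\<^sup>2 / 6 + z^4 / 90))"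
      by (intro continuous_intros) auto
  qed simp
  then show ?thesis by simp
qed

theorem lemma3p2:
  fixes x :: real
  assumes "x > 0"
  shows "x * exp (- x\<^sup>2 / 6) < sqrt (2 * pi) * (std_normal_cdf x - 1 / 2)
       \<and> sqrt (2 * pi) * (std_normal_cdf x - 1 / 2) < x * exp (- x\<^sup>2 / 6 + x ^ 4 / 90)"
  unfolding sqrt_2pi_times_std_normal_cdf_minus_half[OF less_imp_le[OF assms]]
  using gauss_integral_lower_bound[OF assms] gauss_integral_upper_bound[OF assms] by blast

end
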